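(* Let $G$ be a triangle-free graph. There exists a positive integer $r_0$ such that $\rho_o(G\square K_r)=\alpha_2(G)$ for every integer $r\geq r_0$.
   Context: All graphs are finite and simple. An open packing of $G$ is a set $P\subseteq V(G)$ whose vertices have pairwise disjoint open neighborhoods; $\rho_o(G)$ is the maximum size of an open packing. A set $S\subseteq V(G)$ is $2$-independent if $G[S]$ has maximum degree less than $2$; $\alpha_2(G)$ is the maximum size of a $2$-independent set. $K_r$ is the complete graph on $r$ vertices and $\square$ denotes the Cartesian product: $(g,h)\sim(g',h')$ iff ($gg'\in E(G)$, $h=h'$) or ($g=g'$, $hh'\in E(H)$). *)

theory Defs
  imports Main
begin

definition simple_graph :: "'a set \<Rightarrow> ('a \<Rightarrow> 'a \<Rightarrow> bool) \<Rightarrow> bool" where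
  "simple_graph V E \<longleftrightarrow> finite V \<and> (\<forall>u v. E u v \<longrightarrow> u \<in> V \<and> v \<in> V)
     \<and> (\<forall>u v. E u v \<longrightarrow> E v u) \<and> (\<forall>v. \<not> E v v)"

definition open_nbhd :: "'a set \<Rightarrow> ('a \<Rightarrow> 'a \<Rightarrow> bool) \<Rightarrow> 'a \<Rightarrow> 'a set" where
  "open_nbhd V E v = {u \<in> V. E v u}"

definition open_packing :: "'a set \<Rightarrow> ('a \<Rightarrow> 'a \<Rightarrow> bool) \<Rightarrow> 'a set \<Rightarrow> bool" where
  "open_packing V E P \<longleftrightarrow> P \<subseteq> V \<and>
     (\<forall>u\<in>P. \<forall>v\<in>P. u \<noteq> v \<longrightarrow> open_nbhd V E u \<inter> open_nbhd V E v = {})"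

definition open_packing_number :: "'a set \<Rightarrow> ('a \<Rightarrow> 'a \<Rightarrow> bool) \<Rightarrow> nat" where
  "open_packing_number V E = Max (card ` {P. open_packing V E P})"

definition two_independent :: "'a set \<Rightarrow> ('a \<Rightarrow> 'a \<Rightarrow> bool) \<Rightarrow> 'a set \<Rightarrow> bool" where
  "two_independent V E S \<longleftrightarrow> S \<subseteq> V \<and> (\<forall>v\<in>S. card {u \<in> S. E v u} < 2)"

definition alpha2 :: "'a set \<Rightarrow> ('a \<Rightarrow> 'a \<Rightarrow> bool) \<Rightarrow> nat" where
  "alpha2 V E = Max (card ` {S. two_independent V E S})"

definition triangle_free :: "'a set \<Rightarrow> ('a \<Rightarrow> 'a \<Rightarrow> bool) \<Rightarrow> bool" where
  "triangle_free V E \<longleftrightarrow> \<not> (\<exists>x\<in>V. \<exists>y\<in>V. \<exists>z\<in>V. E x y \<and> E y z \<and> E x z)"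

definition K_verts :: "nat \<Rightarrow> nat set" where
  "K_verts r = {0..<r}"

definition K_edges :: "nat \<Rightarrow> nat \<Rightarrow> nat \<Rightarrow> bool" where
  "K_edges r i j \<longleftrightarrow> i < r \<and> j < r \<and> i \<noteq> j"

definition cart_verts :: "'a set \<Rightarrow> 'b set \<Rightarrow> ('a \<times> 'b) set" where
  "cart_verts V W = V \<times> W"

definition cart_edges :: "'a set \<Rightarrow> ('a \<Rightarrow> 'a \<Rightarrow> bool) \<Rightarrow> 'b set \<Rightarrow> ('b \<Rightarrow> 'b \<Rightarrow> bool)
    \<Rightarrow> ('a \<times> 'b) \<Rightarrow> ('a \<times> 'b) \<Rightarrow> bool" where
  "cart_edges V E W F p q \<longleftrightarrow> p \<in> V \<times> W \<and> q \<in> V \<times> W \<and>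
     ((E (fst p) (fst q) \<and> snd p = snd q) \<or> (fst p = fst q \<and> F (snd p) (snd q)))"

end

theory Submission
  imports Defs
begin

text \<open>
  For \<open>r \<ge> 3\<close> an open packing \<open>P\<close> of \<open>G \<box> K\<^sub>r\<close> meets every fibre \<open>{g} \<times> K\<^sub>r\<close> at most
  once, since two vertices of a fibre have a common neighbour in a third layer; adjacent
  vertices of the projection lie in the same layer, so a vertex of \<open>P\<close> with two neighbours in
  the projection would be a common neighbour of them.  Hence the projection of \<open>P\<close> is a
  2-independent set of the same size.  Conversely, the components of \<open>G[S]\<close> for a
  2-independent set \<open>S\<close> are single vertices and edges; putting each component into its own
  layer gives an open packing of size \<open>|S|\<close> once \<open>r \<ge> |V(G)|\<close>, triangle-freeness
  excluding a common neighbour of two adjacent vertices of \<open>S\<close>.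
\<close>

lemma Max_card_subsets_le_iff:
  assumes "finite W" "\<And>X. Q X \<Longrightarrow> X \<subseteq> W" "Q {}"
  shows "Max (card ` Collect Q) \<le> n \<longleftrightarrow> (\<forall>X. Q X \<longrightarrow> card X \<le> n)"
proof -
  have "finite (Collect Q)"
    using assms(1,2) by (blast intro: finite_subset[of _ "Pow W"])
  then show ?thesis
    using assms(3) by (subst Max_le_iff) auto
qed

lemma open_packing_number_le_iff:
  assumes "finite V"
  shows "open_packing_number V E \<le> n \<longleftrightarrow> (\<forall>P. open_packing V E P \<longrightarrow> card P \<le> n)"
  unfolding open_packing_number_def
  using assms by (rule Max_card_subsets_le_iff) (auto simp: open_packing_def)

lemma alpha2_le_iff:
  assumes "finite V"
  shows "alpha2 V E \<le> n \<longleftrightarrow> (\<forall>S. two_independent V E S \<longrightarrow> card S \<le> n)"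
  unfolding alpha2_def
  using assms by (rule Max_card_subsets_le_iff) (auto simp: two_independent_def)

lemma open_packing_common_neighbour:
  assumes "open_packing V E P" "p \<in> P" "q \<in> P" "x \<in> V" "E p x" "E q x"
  shows "p = q"
  using assms unfolding open_packing_def open_nbhd_def by blast

lemma two_independent_neighbour_unique:
  assumes "simple_graph V E" "two_independent V E S" "a \<in> S"
    and "u \<in> S" "E a u" "v \<in> S" "E a v"
  shows "u = v"
proof -
  have "finite {w \<in> S. E a w}"
    using assms(1,2) unfolding simple_graph_def two_independent_def
    by (blast intro: finite_subset)
  moreover have "card {w \<in> S. E a w} \<le> 1"
    using assms(2,3) unfolding two_independent_def by fastforce
  ultimately show ?thesis
    using assms(4-) by (auto simp: card_le_Suc0_iff_eq)
qed

lemma cart_edges_K_edges: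
  assumes "simple_graph V E"
  shows "cart_edges V E (K_verts r) (K_edges r) (g, i) (h, j) \<longleftrightarrow>
           g \<in> V \<and> h \<in> V \<and> i < r \<and> j < r \<and> (E g h \<and> i = j \<or> g = h \<and> i \<noteq> j)"
  using assms unfolding simple_graph_def cart_edges_def K_edges_def K_verts_def by auto

context
  fixes V :: "'a set" and E :: "'a \<Rightarrow> 'a \<Rightarrow> bool" and r :: nat and P :: "('a \<times> nat) set"
  assumes graph: "simple_graph V E"
    and packing: "open_packing (cart_verts V (K_verts r)) (cart_edges V E (K_verts r) (K_edges r)) P"
begin

private lemma packing_subset: "P \<subseteq> V \<times> {0..<r}"
  using packing by (simp add: open_packing_def cart_verts_def K_verts_def)

private lemma packing_common_neighbour:
  assumes "p \<in> P" "q \<in> P" "x \<in> V \<times> {0..<r}"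
    and "cart_edges V E (K_verts r) (K_edges r) p x" "cart_edges V E (K_verts r) (K_edges r) q x"
  shows "p = q"
  using open_packing_common_neighbour[OF packing] assms by (simp add: cart_verts_def K_verts_def)

lemma open_packing_cart_K_inj_fst:
  assumes "3 \<le> r"
  shows "inj_on fst P"
proof (rule inj_onI)
  fix p q assume "p \<in> P" "q \<in> P" "fst p = fst q"
  then obtain g i j where p: "p = (g, i)" "(g, i) \<in> P" and q: "q = (g, j)" "(g, j) \<in> P"
    by (metis prod.collapse)
  obtain k :: nat where k: "k < 3" "k \<noteq> i" "k \<noteq> j"
    by (metis less_irrefl_nat numeral_3_eq_3 less_Suc_eq)
  have "g \<in> V" "i < r" "j < r" "k < r"
    using packing_subset p q k assms by auto
  then have "(g, i) = (g, j) \<or> i = j"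
    using packing_common_neighbour[OF p(2) q(2), of "(g, k)"] k
    by (auto simp: cart_edges_K_edges[OF graph])
  then show "p = q" using p q by auto
qed

lemma open_packing_cart_K_same_layer:
  assumes "(g, i) \<in> P" "(h, j) \<in> P" "E g h"
  shows "i = j"
proof (rule ccontr)
  assume "i \<noteq> j"
  have "g \<in> V" "h \<in> V" "E h g" "\<not> E g g"
    using graph assms(3) unfolding simple_graph_def by blast+
  moreover have "i < r" "j < r" using packing_subset assms by auto
  ultimately have "(g, i) = (h, j)"
    using packing_common_neighbour[OF assms(1,2), of "(g, j)"] \<open>i \<noteq> j\<close>
    by (auto simp: cart_edges_K_edges[OF graph])
  then show False using assms(3) \<open>\<not> E g g\<close> by simp
qed

lemma open_packing_cart_K_two_independent: "two_independent V E (fst ` P)"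
  unfolding two_independent_def
proof (intro conjI ballI)
  show "fst ` P \<subseteq> V" using packing_subset by auto
  fix g assume "g \<in> fst ` P"
  then obtain i where gi: "(g, i) \<in> P" by force
  have "finite P"
    using graph finite_subset[OF packing_subset] unfolding simple_graph_def by blast
  moreover have "h1 = h2" if h: "h1 \<in> fst ` P" "E g h1" "h2 \<in> fst ` P" "E g h2" for h1 h2
  proof -
    obtain j1 j2 where hj: "(h1, j1) \<in> P" "(h2, j2) \<in> P" using h(1,3) by force
    then have "j1 = i" "j2 = i"
      using open_packing_cart_K_same_layer[OF gi _ h(2)] open_packing_cart_K_same_layer[OF gi _ h(4)]
      by auto
    moreover have "g \<in> V" "h1 \<in> V" "h2 \<in> V" "E h1 g" "E h2 g"
      using graph h(2,4) unfolding simple_graph_def by blast+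
    moreover have "i < r" using packing_subset gi by auto
    ultimately show ?thesis
      using packing_common_neighbour[OF hj, of "(g, i)"] by (auto simp: cart_edges_K_edges[OF graph])
  qed
  ultimately have "card {h \<in> fst ` P. E g h} \<le> Suc 0"
    by (subst card_le_Suc0_iff_eq) auto
  then show "card {h \<in> fst ` P. E g h} < 2" by simp
qed

end

lemma two_independent_component_labelling:
  assumes graph: "simple_graph V E" and S: "two_independent V E S"
  obtains L :: "'a \<Rightarrow> nat"
  where "\<forall>v\<in>S. L v < card V" "\<forall>u\<in>S. \<forall>v\<in>S. L u = L v \<longleftrightarrow> u = v \<or> E u v"
proof -
  \<comment> \<open>\<open>C v\<close> is the component of \<open>v\<close> in \<open>G[S]\<close>, which has at most one other vertex.\<close>
  define C where "C v = insert v {u \<in> S. E v u}" for v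
  have same_component: "C u = C v \<longleftrightarrow> u = v \<or> E u v" if "u \<in> S" "v \<in> S" for u v
  proof
    assume "u = v \<or> E u v"
    moreover have "{w \<in> S. E u w} = {v}" "{w \<in> S. E v w} = {u}" if "E u v"
      using two_independent_neighbour_unique[OF graph S] \<open>u \<in> S\<close> \<open>v \<in> S\<close> that graph
      unfolding simple_graph_def by blast+
    ultimately show "C u = C v" unfolding C_def by auto
  qed (auto simp: C_def)
  have "finite S" "S \<subseteq> V"
    using graph S unfolding simple_graph_def two_independent_def by (auto intro: finite_subset)
  then obtain idx where idx: "bij_betw idx (C ` S) {0..<card (C ` S)}"
    using ex_bij_betw_finite_nat by blast
  have "card (C ` S) \<le> card V"
    using card_image_le[OF \<open>finite S\<close>] card_mono[OF _ \<open>S \<subseteq> V\<close>] graph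
    unfolding simple_graph_def by (meson le_trans)
  then have "\<forall>v\<in>S. idx (C v) < card V"
    using bij_betwE[OF idx] by fastforce
  moreover have "\<forall>u\<in>S. \<forall>v\<in>S. idx (C u) = idx (C v) \<longleftrightarrow> u = v \<or> E u v"
    using same_component inj_on_eq_iff[OF bij_betw_imp_inj_on[OF idx]] by simp
  ultimately show ?thesis by (rule that)
qed

lemma open_packing_cart_K_of_labelling:
  assumes graph: "simple_graph V E" and tf: "triangle_free V E" and "S \<subseteq> V"
    and L: "\<forall>v\<in>S. L v < r" "\<forall>u\<in>S. \<forall>v\<in>S. L u = L v \<longleftrightarrow> u = v \<or> E u v"
  shows "open_packing (cart_verts V (K_verts r)) (cart_edges V E (K_verts r) (K_edges r))
           ((\<lambda>v. (v, L v)) ` S)"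
  unfolding open_packing_def
proof (intro conjI ballI impI)
  show "(\<lambda>v. (v, L v)) ` S \<subseteq> cart_verts V (K_verts r)"
    using \<open>S \<subseteq> V\<close> L(1) by (auto simp: cart_verts_def K_verts_def)
  have Esym: "E u v \<Longrightarrow> E v u" for u v using graph unfolding simple_graph_def by blast
  fix p q assume "p \<in> (\<lambda>v. (v, L v)) ` S" "q \<in> (\<lambda>v. (v, L v)) ` S" "p \<noteq> q"
  then obtain u v where p: "p = (u, L u)" and q: "q = (v, L v)" and uv: "u \<in> S" "v \<in> S" "u \<noteq> v"
    by auto
  have False if "cart_edges V E (K_verts r) (K_edges r) (u, L u) (y, k)"
    and "cart_edges V E (K_verts r) (K_edges r) (v, L v) (y, k)" for y k
  proof -
    have "(E u y \<and> L u = k \<or> u = y \<and> L u \<noteq> k) \<and> (E v y \<and> L v = k \<or> v = y \<and> L v \<noteq> k)"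
      "y \<in> V"
      using that by (auto simp: cart_edges_K_edges[OF graph])
    then show False
      using L(2) uv tf Esym \<open>S \<subseteq> V\<close> unfolding triangle_free_def by (metis subsetD)
  qed
  then show "open_nbhd (cart_verts V (K_verts r)) (cart_edges V E (K_verts r) (K_edges r)) p \<inter>
             open_nbhd (cart_verts V (K_verts r)) (cart_edges V E (K_verts r) (K_edges r)) q = {}"
    unfolding p q open_nbhd_def by auto
qed

theorem mainTheorem7:
  fixes V :: "'a set" and E :: "'a \<Rightarrow> 'a \<Rightarrow> bool"
  assumes "simple_graph V E" and "triangle_free V E"
  shows "\<exists>r0::nat. r0 > 0 \<and> (\<forall>r\<ge>r0.
           open_packing_number (cart_verts V (K_verts r)) (cart_edges V E (K_verts r) (K_edges r))
           = alpha2 V E)"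
proof (intro exI[of _ "card V + 3"] conjI allI impI)
  fix r assume r: "card V + 3 \<le> r"
  let ?W = "cart_verts V (K_verts r)" and ?F = "cart_edges V E (K_verts r) (K_edges r)"
  have finV: "finite V" and finW: "finite ?W"
    using assms(1) by (auto simp: simple_graph_def cart_verts_def K_verts_def)
  have "card P \<le> alpha2 V E" if "open_packing ?W ?F P" for P
    using open_packing_cart_K_two_independent[OF assms(1) that]
      card_image[OF open_packing_cart_K_inj_fst[OF assms(1) that]] r
      alpha2_le_iff[OF finV, where E = E and n = "alpha2 V E"] by auto
  moreover have "card S \<le> open_packing_number ?W ?F" if S: "two_independent V E S" for S
  proof -
    obtain L where L: "\<forall>v\<in>S. L v < card V" "\<forall>u\<in>S. \<forall>v\<in>S. L u = L v \<longleftrightarrow> u = v \<or> E u v"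
      using two_independent_component_labelling[OF assms(1) S] by blast
    have "\<forall>v\<in>S. L v < r" using L(1) r by auto
    from open_packing_cart_K_of_labelling[OF assms _ this L(2)]
    have "open_packing ?W ?F ((\<lambda>v. (v, L v)) ` S)"
      using S by (simp add: two_independent_def)
    moreover have "card ((\<lambda>v. (v, L v)) ` S) = card S"
      by (rule card_image) (auto intro: inj_onI)
    ultimately show ?thesis
      using open_packing_number_le_iff[OF finW, where E = ?F and n = "open_packing_number ?W ?F"] by auto
  qed
  ultimately show "open_packing_number ?W ?F = alpha2 V E"
    by (simp add: le_antisym open_packing_number_le_iff[OF finW] alpha2_le_iff[OF finV])
qed simp

end
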